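(* $\mathbb G_2=\widetilde{\mathbb G}_2$, whereas $\mathbb G_n\subsetneq\widetilde{\mathbb G}_n$ for every $n\ge 3$.
   Context: $\mathbb D$ is the open unit disc. For $n\ge 2$ let $\pi_n:\mathbb C^n\to\mathbb C^n$, $\pi_n(z)=(s_1(z),\dots,s_{n-1}(z),p(z))$, where $s_i$ is the $i$-th elementary symmetric polynomial in $z_1,\dots,z_n$ and $p(z)=z_1\cdots z_n$. The symmetrized polydisc is $\mathbb G_n=\pi_n(\mathbb D^n)$. The extended symmetrized polydisc is $\widetilde{\mathbb G}_n=\{(y_1,\dots,y_{n-1},q)\in\mathbb C^n: q\in\mathbb D,\ y_j=\beta_j+\bar\beta_{n-j}q \text{ for some }\beta_1,\dots,\beta_{n-1}\in\mathbb C \text{ with } |\beta_j|+|\beta_{n-j}|<\binom{n}{j},\ j=1,\dots,n-1\}$. *)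

theory Defs
  imports Complex_Main
begin

text \<open>Points of C^n are represented as complex lists of length n.
  A point z of D^n is a function z :: nat => complex, of which only the
  coordinates z 0, ..., z (n-1) are used.\<close>

definition unit_disc :: "complex set" where
  "unit_disc = {w. cmod w < 1}"

definition esym :: "nat \<Rightarrow> nat \<Rightarrow> (nat \<Rightarrow> complex) \<Rightarrow> complex" where
  "esym n i z = (\<Sum>S\<in>{S. S \<subseteq> {..<n} \<and> card S = i}. \<Prod>k\<in>S. z k)"

definition sym_map :: "nat \<Rightarrow> (nat \<Rightarrow> complex) \<Rightarrow> complex list" where
  "sym_map n z = map (\<lambda>i. esym n i z) [1..<n] @ [\<Prod>k<n. z k]"

definition symG :: "nat \<Rightarrow> complex list set" where
  "symG n = {sym_map n z | z. \<forall>k<n. z k \<in> unit_disc}"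

text \<open>Extended symmetrized polydisc. The list ys = [y_1, ..., y_{n-1}] is
  indexed from 0, so y_j = ys ! (j - 1); beta_j = beta j for j = 1..n-1.\<close>
definition extG :: "nat \<Rightarrow> complex list set" where
  "extG n = {ys @ [q] | ys q. q \<in> unit_disc \<and> length ys = n - 1 \<and>
     (\<exists>\<beta>::nat \<Rightarrow> complex. \<forall>j\<in>{1..n-1}.
        ys ! (j - 1) = \<beta> j + cnj (\<beta> (n - j)) * q \<and>
        cmod (\<beta> j) + cmod (\<beta> (n - j)) < real (n choose j))}"

end

theory Submission
  imports Defs
begin

text \<open>Any two points a, c of the disc split as a = b(a,c) + cnj (b(c,a)) a c with
  |b(a,c)| + |b(c,a)| < 1, where b = disc_split. For z in D^n and a j-subset S of the indices,
  apply this to the monomial a = \<Prod>S z and the complementary monomial c, whose product is p.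
  Summing over all j-subsets yields beta_j with s_j = beta_j + cnj beta_(n-j) p and
  |beta_j| + |beta_(n-j)| < (n choose j), so G_n lies in the extended polydisc.

  For n = 2, y = beta + cnj beta q with |beta| < 1 gives |y - cnj y q| = |beta| (1 - |q|^2)
  < 1 - |q|^2, the Agler-Young criterion for both roots of t^2 - y t + q to lie in the disc.
  For n \<ge> 3 the point (n - 1, 0, ..., 0) is in the extended polydisc (beta_1 = n - 1, all other
  beta_j = 0) but not in G_n: p = 0 forces a zero coordinate, and then |s_1| < n - 1.\<close>

definition disc_split :: "complex \<Rightarrow> complex \<Rightarrow> complex" where
  "disc_split a c = a * of_real ((1 - (norm c)^2) / (1 - (norm a * norm c)^2))"

lemma disc_split_decomp:
  assumes "norm a < 1" "norm c < 1"
  shows "a = disc_split a c + cnj (disc_split c a) * (a * c)"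
proof -
  define D where "D = 1 - (norm a * norm c)^2"
  have "norm a * norm c < 1"
    using assms by (metis mult_strict_mono' norm_ge_zero mult_1_right)
  then have "D \<noteq> 0"
    using power_less_one_iff[of "norm a * norm c" 2] unfolding D_def by simp
  have cc: "c * cnj c = of_real ((norm c)^2)"
    by (rule complex_norm_square[symmetric])
  define X where "X = (1 - (norm c)^2) / D"
  define Y where "Y = (1 - (norm a)^2) / D"
  have "disc_split a c = a * of_real X" "disc_split c a = c * of_real Y"
    unfolding disc_split_def X_def Y_def D_def by (simp_all add: mult.commute)
  then have "disc_split a c + cnj (disc_split c a) * (a * c) = a * of_real X + a * (c * cnj c) * of_real Y"
    by (simp add: algebra_simps)
  also have "\<dots> = a * of_real (X + (norm c)^2 * Y)"
    unfolding cc by (simp add: algebra_simps)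
  also have "X + (norm c)^2 * Y = 1"
    using \<open>D \<noteq> 0\<close> unfolding X_def Y_def D_def by (simp add: field_simps power_mult_distrib)
  finally show ?thesis by simp
qed

lemma norm_disc_split_add_less:
  assumes "norm a < 1" "norm c < 1"
  shows "norm (disc_split a c) + norm (disc_split c a) < 1"
proof -
  define x where "x = norm a"
  define y where "y = norm c"
  have x: "0 \<le> x" "x < 1" and y: "0 \<le> y" "y < 1"
    using assms unfolding x_def y_def by auto
  have xy: "x * y < 1"
    using x y by (metis mult_strict_mono' mult_1_right)
  then have D: "0 < 1 - (x * y)^2"
    using x y by (simp add: abs_square_less_1)
  have "x^2 \<le> 1" "y^2 \<le> 1"
    using x y by (simp_all add: power_le_one)
  then have "norm (disc_split a c) = x * ((1 - y^2) / (1 - (x * y)^2))"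
    "norm (disc_split c a) = y * ((1 - x^2) / (1 - (x * y)^2))"
    using D unfolding disc_split_def norm_mult norm_of_real x_def y_def
    by (simp_all add: mult.commute[of "norm c" "norm a"])
  then have "norm (disc_split a c) + norm (disc_split c a)
      = (x * (1 - y^2) + y * (1 - x^2)) / (1 - (x * y)^2)"
    by (simp add: add_divide_distrib)
  also have "\<dots> < 1"
  proof -
    have "0 < (1 - x) * (1 - y) * (1 - x * y)"
      using x y xy by simp
    then have "x * (1 - y^2) + y * (1 - x^2) < 1 - (x * y)^2"
      by (simp add: algebra_simps power2_eq_square)
    then show ?thesis
      using D by simp
  qed
  finally show ?thesis .
qed

lemma norm_prod_less_one:
  fixes z :: "'a \<Rightarrow> complex"
  shows "finite S \<Longrightarrow> S \<noteq> {} \<Longrightarrow> \<forall>k\<in>S. norm (z k) < 1 \<Longrightarrow> norm (\<Prod>k\<in>S. z k) < 1"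
proof (induction S rule: finite_ne_induct)
  case (singleton x)
  then show ?case by simp
next
  case (insert x F)
  then have "norm (z x) < 1" "norm (\<Prod>k\<in>F. z k) < 1"
    by auto
  then show ?case
    using mult_strict_mono'[of "norm (z x)" 1 "norm (\<Prod>k\<in>F. z k)" 1] insert.hyps
    by (simp add: norm_mult)
qed

definition ksubsets :: "nat \<Rightarrow> nat \<Rightarrow> nat set set" where
  "ksubsets n j = {S. S \<subseteq> {..<n} \<and> card S = j}"

lemma finite_ksubsets: "finite (ksubsets n j)"
  unfolding ksubsets_def by (rule finite_subset[of _ "Pow {..<n}"]) auto

lemma card_ksubsets: "card (ksubsets n j) = n choose j"
  unfolding ksubsets_def using n_subsets[of "{..<n}" j] by simp

lemma ksubsets_nonempty:
  assumes "j \<le> n"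
  shows "ksubsets n j \<noteq> {}"
proof -
  have "{..<j} \<in> ksubsets n j"
    using assms unfolding ksubsets_def by auto
  then show ?thesis
    by blast
qed

lemma ksubsets_proper:
  assumes "S \<in> ksubsets n j" "1 \<le> j" "j < n"
  shows "S \<subseteq> {..<n}" "S \<noteq> {}" "{..<n} - S \<noteq> {}"
proof -
  have "finite S" "card S = j" "S \<subseteq> {..<n}"
    using assms(1) finite_subset unfolding ksubsets_def by auto
  then show "S \<subseteq> {..<n}" "S \<noteq> {}" "{..<n} - S \<noteq> {}"
    using assms(2,3) card_mono[of S "{..<n}"] by auto
qed

lemma sum_ksubsets_compl:
  assumes "j \<le> n"
  shows "(\<Sum>T\<in>ksubsets n (n - j). h T) = (\<Sum>S\<in>ksubsets n j. h ({..<n} - S))"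
proof (rule sum.reindex_bij_witness[of _ "\<lambda>T. {..<n} - T" "\<lambda>T. {..<n} - T"])
  fix S assume "S \<in> ksubsets n j"
  then show "{..<n} - S \<in> ksubsets n (n - j)" "{..<n} - ({..<n} - S) = S"
    unfolding ksubsets_def by (auto simp: card_Diff_subset finite_subset)
next
  fix T assume "T \<in> ksubsets n (n - j)"
  then have T: "T \<subseteq> {..<n}" "card T = n - j"
    unfolding ksubsets_def by auto
  then have "card ({..<n} - T) = j"
    using assms by (simp add: card_Diff_subset finite_subset)
  then show "{..<n} - T \<in> ksubsets n j" "{..<n} - ({..<n} - T) = T"
    unfolding ksubsets_def using T by auto
qed (auto simp: ksubsets_def Diff_Diff_Int Int_absorb1)

lemma esym_one: "esym n 1 z = (\<Sum>k<n. z k)"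
proof -
  have "{S. S \<subseteq> {..<n} \<and> card S = 1} = (\<lambda>k. {k}) ` {..<n}"
    by (auto simp: card_1_singleton_iff)
  then show ?thesis
    unfolding esym_def by (simp add: sum.reindex)
qed

lemma map_upt_append_in_extG:
  assumes "q \<in> unit_disc"
    and "\<And>j. 1 \<le> j \<Longrightarrow> j < n \<Longrightarrow> y j = \<beta> j + cnj (\<beta> (n - j)) * q"
    and "\<And>j. 1 \<le> j \<Longrightarrow> j < n \<Longrightarrow> norm (\<beta> j) + norm (\<beta> (n - j)) < real (n choose j)"
  shows "map y [1..<n] @ [q] \<in> extG n"
  unfolding extG_def using assms by (auto simp: nth_map_upt intro!: exI[of _ \<beta>])

definition split_coeff :: "nat \<Rightarrow> (nat \<Rightarrow> complex) \<Rightarrow> nat \<Rightarrow> complex" where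
  "split_coeff n z j =
     (\<Sum>S\<in>ksubsets n j. disc_split (\<Prod>k\<in>S. z k) (\<Prod>k\<in>{..<n} - S. z k))"

lemma split_coeff_compl:
  assumes "j \<le> n"
  shows "split_coeff n z (n - j) =
    (\<Sum>S\<in>ksubsets n j. disc_split (\<Prod>k\<in>{..<n} - S. z k) (\<Prod>k\<in>S. z k))"
  unfolding split_coeff_def sum_ksubsets_compl[OF assms]
  by (intro sum.cong) (auto simp: ksubsets_def Diff_Diff_Int Int_absorb1)

lemma norm_prod_subset_less_one:
  fixes z :: "nat \<Rightarrow> complex"
  assumes "\<forall>k<n. z k \<in> unit_disc" "S \<subseteq> {..<n}" "S \<noteq> {}"
  shows "norm (\<Prod>k\<in>S. z k) < 1"
proof (rule norm_prod_less_one)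
  show "finite S"
    using assms(2) by (rule finite_subset) (rule finite_lessThan)
qed (use assms in \<open>auto simp: unit_disc_def\<close>)

lemma esym_eq_split_coeff:
  assumes z: "\<forall>k<n. z k \<in> unit_disc" and j: "1 \<le> j" "j < n"
  shows "esym n j z = split_coeff n z j + cnj (split_coeff n z (n - j)) * (\<Prod>k<n. z k)"
proof -
  have decomp: "(\<Prod>k\<in>S. z k) = disc_split (\<Prod>k\<in>S. z k) (\<Prod>k\<in>{..<n} - S. z k)
      + cnj (disc_split (\<Prod>k\<in>{..<n} - S. z k) (\<Prod>k\<in>S. z k)) * (\<Prod>k<n. z k)"
    if S: "S \<in> ksubsets n j" for S
  proof -
    note S' = ksubsets_proper[OF S j]
    have "(\<Prod>k<n. z k) = (\<Prod>k\<in>S. z k) * (\<Prod>k\<in>{..<n} - S. z k)"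
      using prod.subset_diff[OF S'(1)] by (simp add: mult.commute)
    then show ?thesis
      using disc_split_decomp norm_prod_subset_less_one[OF z] S' by simp
  qed
  have "esym n j z = (\<Sum>S\<in>ksubsets n j. disc_split (\<Prod>k\<in>S. z k) (\<Prod>k\<in>{..<n} - S. z k)
      + cnj (disc_split (\<Prod>k\<in>{..<n} - S. z k) (\<Prod>k\<in>S. z k)) * (\<Prod>k<n. z k))"
    unfolding esym_def ksubsets_def[symmetric] using decomp by (rule sum.cong[OF refl])
  then show ?thesis
    unfolding split_coeff_compl[OF less_imp_le[OF j(2)]]
    by (simp add: split_coeff_def sum.distrib sum_distrib_right cnj_sum)
qed

lemma norm_split_coeff_add_less:
  assumes z: "\<forall>k<n. z k \<in> unit_disc" and j: "1 \<le> j" "j < n"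
  shows "norm (split_coeff n z j) + norm (split_coeff n z (n - j)) < real (n choose j)"
proof -
  let ?a = "\<lambda>S. \<Prod>k\<in>S. z k" and ?c = "\<lambda>S. \<Prod>k\<in>{..<n} - S. z k"
  have "norm (split_coeff n z j) + norm (split_coeff n z (n - j))
      \<le> (\<Sum>S\<in>ksubsets n j. norm (disc_split (?a S) (?c S)) + norm (disc_split (?c S) (?a S)))"
    unfolding split_coeff_compl[OF less_imp_le[OF j(2)]] unfolding split_coeff_def sum.distrib
    by (intro add_mono norm_sum)
  also have "\<dots> < (\<Sum>S\<in>ksubsets n j. 1)"
  proof (rule sum_strict_mono[OF finite_ksubsets ksubsets_nonempty])
    fix S assume "S \<in> ksubsets n j"
    then show "norm (disc_split (?a S) (?c S)) + norm (disc_split (?c S) (?a S)) < 1"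
      using ksubsets_proper[OF _ j] norm_prod_subset_less_one[OF z]
      by (intro norm_disc_split_add_less) auto
  qed (use j in simp)
  also have "\<dots> = real (n choose j)"
    by (simp add: card_ksubsets)
  finally show ?thesis .
qed

lemma symG_subset_extG:
  assumes "n \<ge> 1"
  shows "symG n \<subseteq> extG n"
proof
  fix x assume "x \<in> symG n"
  then obtain z where x: "x = sym_map n z" and z: "\<forall>k<n. z k \<in> unit_disc"
    unfolding symG_def by auto
  have "(\<Prod>k<n. z k) \<in> unit_disc"
    using norm_prod_subset_less_one[OF z, of "{..<n}"] assms
    by (auto simp: unit_disc_def lessThan_empty_iff)
  then show "x \<in> extG n"
    unfolding x sym_map_def
    using esym_eq_split_coeff[OF z] norm_split_coeff_add_less[OF z]
    by (intro map_upt_append_in_extG) blast+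
qed

lemma norm_root_less_one:
  fixes u v :: complex
  assumes uv: "norm (u * v) < 1"
    and crit: "norm (u + v - cnj (u + v) * (u * v)) < 1 - (norm (u * v))^2"
  shows "norm u < 1"
proof (rule ccontr)
  define x where "x = norm u"
  define y where "y = norm v"
  assume "\<not> norm u < 1"
  then have x1: "1 \<le> x"
    unfolding x_def by simp
  have xy: "x * y < 1"
    using uv by (simp add: x_def y_def norm_mult)
  have y0: "0 \<le> y"
    by (simp add: y_def)
  then have y1: "y < 1"
    using mult_right_mono[OF x1 y0] xy by simp
  have eq: "u + v - cnj (u + v) * (u * v) = u * of_real (1 - y^2) - v * of_real (x^2 - 1)"
  proof -
    have "u * cnj u = of_real (x^2)"
      unfolding x_def by (rule complex_norm_square[symmetric])
    moreover have "v * cnj v = of_real (y^2)"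
      unfolding y_def by (rule complex_norm_square[symmetric])
    ultimately show ?thesis
      by (simp add: algebra_simps)
  qed
  have "y^2 \<le> 1" "1 \<le> x^2"
    using y0 y1 x1 by (simp_all add: power_le_one one_le_power)
  then have "norm (u * of_real (1 - y^2)) = x * (1 - y^2)"
    "norm (v * of_real (x^2 - 1)) = y * (x^2 - 1)"
    unfolding norm_mult norm_of_real x_def[symmetric] y_def[symmetric] by simp_all
  then have "x * (1 - y^2) - y * (x^2 - 1) \<le> norm (u + v - cnj (u + v) * (u * v))"
    unfolding eq by (metis norm_triangle_ineq2)
  moreover have "0 \<le> (x - 1) * (1 - y) * (1 - x * y)"
    using x1 y1 xy by simp
  moreover have "x * (1 - y^2) - y * (x^2 - 1) - (1 - (x * y)^2) = (x - 1) * (1 - y) * (1 - x * y)"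
    by (simp add: algebra_simps power2_eq_square)
  moreover have "(norm (u * v))^2 = (x * y)^2"
    unfolding x_def y_def by (simp add: norm_mult)
  ultimately show False
    using crit by linarith
qed

lemma sym_map_two: "sym_map 2 z = [z 0 + z 1, z 0 * z 1]"
  using esym_one[of 2 z] by (simp add: sym_map_def numeral_2_eq_2)

lemma extG_two_subset_symG: "extG 2 \<subseteq> symG 2"
proof
  fix x assume "x \<in> extG 2"
  then obtain y q \<beta> where x: "x = [y, q]" and q: "norm q < 1"
    and y: "y = \<beta> + cnj \<beta> * q" and \<beta>: "norm \<beta> < 1"
    unfolding extG_def unit_disc_def by (auto simp: length_Suc_conv)
  define r where "r = csqrt (y^2 - 4 * q)"
  define z where "z = (\<lambda>k::nat. if k = 0 then (y + r) / 2 else (y - r) / 2)"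
  have sum: "z 0 + z 1 = y"
    unfolding z_def by (simp add: field_simps)
  have "r^2 = y^2 - 4 * q"
    unfolding r_def by simp
  then have prod: "z 0 * z 1 = q"
    unfolding z_def by (simp add: field_simps power2_eq_square)
  have "(norm q)^2 < 1"
    using q by (simp add: abs_square_less_1)
  have "y - cnj y * q = \<beta> * of_real (1 - (norm q)^2)"
    unfolding y by (simp add: algebra_simps complex_norm_square[symmetric])
  moreover have "\<bar>1 - (norm q)^2\<bar> = 1 - (norm q)^2"
    using \<open>(norm q)^2 < 1\<close> by simp
  ultimately have "norm (y - cnj y * q) = norm \<beta> * (1 - (norm q)^2)"
    by (simp only: norm_mult norm_of_real)
  also have "\<dots> < 1 - (norm q)^2"
    using \<beta> \<open>(norm q)^2 < 1\<close> by simp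
  finally have crit: "norm (z 0 + z 1 - cnj (z 0 + z 1) * (z 0 * z 1)) < 1 - (norm (z 0 * z 1))^2"
    unfolding sum prod .
  have "norm (z 0) < 1" "norm (z 1) < 1"
    using norm_root_less_one[of "z 0" "z 1"] norm_root_less_one[of "z 1" "z 0"] crit prod q
    by (simp_all add: ac_simps)
  then have "\<forall>k<2. z k \<in> unit_disc"
    unfolding unit_disc_def by (auto simp: less_2_cases_iff)
  moreover have "x = sym_map 2 z"
    unfolding sym_map_two x sum prod ..
  ultimately show "x \<in> symG 2"
    unfolding symG_def by blast
qed

lemma norm_esym_one_less:
  assumes "n \<ge> 2" "\<forall>k<n. z k \<in> unit_disc" "(\<Prod>k<n. z k) = 0"
  shows "norm (esym n 1 z) < real (n - 1)"
proof -
  obtain m where m: "m < n" "z m = 0"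
    using assms(3) by auto
  have "norm (esym n 1 z) \<le> (\<Sum>k\<in>{..<n} - {m}. norm (z k))"
    unfolding esym_one using norm_sum[of z "{..<n}"] sum.remove[of "{..<n}" m "\<lambda>k. norm (z k)"] m
    by simp
  also have "\<dots> < (\<Sum>k\<in>{..<n} - {m}. 1)"
  proof (rule sum_strict_mono)
    have "(if m = 0 then 1 else 0) \<in> {..<n} - {m}"
      using assms(1) by auto
    then show "{..<n} - {m} \<noteq> {}"
      by blast
  qed (use assms(2) in \<open>auto simp: unit_disc_def\<close>)
  also have "\<dots> = real (n - 1)"
    using m by simp
  finally show ?thesis .
qed

lemma symG_ne_extG:
  assumes n: "n \<ge> 3"
  shows "symG n \<noteq> extG n"
proof -
  define y where "y i = (if i = 1 then of_nat (n - 1) else 0 :: complex)" for i :: nat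
  have "n choose (n - 1) = n"
    using n binomial_symmetric[of 1 n] by simp
  then have "norm (y j) + norm (y (n - j)) < real (n choose j)" if "1 \<le> j" "j < n" for j
    using n that by (cases "j = 1"; cases "j = n - 1") (auto simp: y_def simp del: of_nat_diff)
  then have "map y [1..<n] @ [0] \<in> extG n"
    by (intro map_upt_append_in_extG[where \<beta> = y]) (auto simp: unit_disc_def)
  moreover have "map y [1..<n] @ [0] \<notin> symG n"
  proof
    assume "map y [1..<n] @ [0] \<in> symG n"
    then obtain z where e: "map y [1..<n] @ [0] = sym_map n z" and z: "\<forall>k<n. z k \<in> unit_disc"
      unfolding symG_def by auto
    have "(\<Prod>k<n. z k) = 0" "esym n 1 z = of_nat (n - 1)"
      using e n by (simp_all add: sym_map_def upt_conv_Cons y_def)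
    then show False
      using norm_esym_one_less[OF _ z] n by (simp del: of_nat_diff)
  qed
  ultimately show ?thesis
    by blast
qed

theorem mainTheorem1:
  shows "symG 2 = extG 2 \<and> (\<forall>n::nat. n \<ge> 3 \<longrightarrow> symG n \<subset> extG n)"
proof (intro conjI allI impI)
  show "symG 2 = extG 2"
    using symG_subset_extG[of 2] extG_two_subset_symG by auto
  fix n :: nat
  assume "n \<ge> 3"
  then show "symG n \<subset> extG n"
    using symG_subset_extG[of n] symG_ne_extG[of n] by auto
qed

end
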